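(* Let $\mathcal C$ be a cartesian closed category with regular epi-mono factorizations, $S$ an object, and $T$ the state monad on $S$. For every $T$-algebra $(X,h)$, with $Y=L(X,h)$, the morphism $e_X^*:X\to Y^S$ is a morphism of $T$-algebras from $(X,h)$ to $(Y^S,\epsilon_Y^S)$, i.e. $e_X^*\circ h=\epsilon_Y^S\circ T(e_X^* )$.
   Context: $U(X)=X^S$, $F(X)=S\times X$, $F\dashv U$, $T=UF$, $TX=(S\times X)^S$. For $f:S\times X\to Z$, $f^*:X\to Z^S$ is its transpose. $\epsilon_Z:S\times Z^S\to Z$ is the counit (evaluation), $\eta_X=(\mathrm{id}_{S\times X})^*$, $\mu_X=(\epsilon_{S\times X})^S$; $q_X:S\times X\to X$ is the second projection. A $T$-algebra is $(X,h)$, $h:TX\to X$, with $h\circ Th=h\circ\mu_X$, $h\circ\eta_X=\mathrm{id}_X$; a morphism $(X,h)\to(X',h')$ is $u:X\to X'$ with $h'\circ Tu=u\circ h$. For a $T$-algebra $(X,h)$, $f_X=h\circ q_{S\times X}^*:S\times X\to X$ is factored as $f_X=m_X\circ e_X$ with $e_X:S\times X\to Y$ a regular epimorphism and $m_X:Y\to X$ a monomorphism; $Y=L(X,h)$ and $e_X^*:X\to Y^S$ is the transpose of $e_X$. *)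

theory Defs
  imports Main
begin

text \<open>Arrows carry a domain and codomain; Cmp C g f is g after f.
Exp C S Z is the exponential Z^S, Ev C S Z : S x Z^S -> Z the evaluation.\<close>

record ('o,'m) ccat =
  Obj :: "'o set"
  Arr :: "'m set"
  Dom :: "'m \<Rightarrow> 'o"
  Cod :: "'m \<Rightarrow> 'o"
  Cmp :: "'m \<Rightarrow> 'm \<Rightarrow> 'm"
  Id  :: "'o \<Rightarrow> 'm"
  Prd :: "'o \<Rightarrow> 'o \<Rightarrow> 'o"
  Pr1 :: "'o \<Rightarrow> 'o \<Rightarrow> 'm"
  Pr2 :: "'o \<Rightarrow> 'o \<Rightarrow> 'm"
  Trm :: "'o"
  Exp :: "'o \<Rightarrow> 'o \<Rightarrow> 'o"
  Ev  :: "'o \<Rightarrow> 'o \<Rightarrow> 'm"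

definition hom :: "('o,'m) ccat \<Rightarrow> 'o \<Rightarrow> 'o \<Rightarrow> 'm set" where
  "hom C A B = {f \<in> Arr C. Dom C f = A \<and> Cod C f = B}"

definition category :: "('o,'m) ccat \<Rightarrow> bool" where
  "category C \<longleftrightarrow>
     (\<forall>f \<in> Arr C. Dom C f \<in> Obj C \<and> Cod C f \<in> Obj C) \<and>
     (\<forall>A \<in> Obj C. Id C A \<in> hom C A A) \<and>
     (\<forall>f \<in> Arr C. \<forall>g \<in> Arr C. Dom C g = Cod C f \<longrightarrow>
        Cmp C g f \<in> hom C (Dom C f) (Cod C g)) \<and>
     (\<forall>f \<in> Arr C. \<forall>g \<in> Arr C. \<forall>k \<in> Arr C. Dom C g = Cod C f \<longrightarrow> Dom C k = Cod C g \<longrightarrow>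
        Cmp C k (Cmp C g f) = Cmp C (Cmp C k g) f) \<and>
     (\<forall>f \<in> Arr C. Cmp C f (Id C (Dom C f)) = f \<and> Cmp C (Id C (Cod C f)) f = f)"

definition has_terminal :: "('o,'m) ccat \<Rightarrow> bool" where
  "has_terminal C \<longleftrightarrow> Trm C \<in> Obj C \<and> (\<forall>A \<in> Obj C. \<exists>!t. t \<in> hom C A (Trm C))"

definition has_products :: "('o,'m) ccat \<Rightarrow> bool" where
  "has_products C \<longleftrightarrow> (\<forall>A \<in> Obj C. \<forall>B \<in> Obj C.
     Prd C A B \<in> Obj C \<and> Pr1 C A B \<in> hom C (Prd C A B) A \<and> Pr2 C A B \<in> hom C (Prd C A B) B \<and>
     (\<forall>Z f g. f \<in> hom C Z A \<longrightarrow> g \<in> hom C Z B \<longrightarrow>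
        (\<exists>!p. p \<in> hom C Z (Prd C A B) \<and> Cmp C (Pr1 C A B) p = f \<and> Cmp C (Pr2 C A B) p = g)))"

definition pmap :: "('o,'m) ccat \<Rightarrow> 'm \<Rightarrow> 'm \<Rightarrow> 'm" where
  "pmap C f g = (THE p. p \<in> hom C (Prd C (Dom C f) (Dom C g)) (Prd C (Cod C f) (Cod C g)) \<and>
      Cmp C (Pr1 C (Cod C f) (Cod C g)) p = Cmp C f (Pr1 C (Dom C f) (Dom C g)) \<and>
      Cmp C (Pr2 C (Cod C f) (Cod C g)) p = Cmp C g (Pr2 C (Dom C f) (Dom C g)))"

definition has_exponentials :: "('o,'m) ccat \<Rightarrow> bool" where
  "has_exponentials C \<longleftrightarrow> (\<forall>S \<in> Obj C. \<forall>Z \<in> Obj C.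
     Exp C S Z \<in> Obj C \<and> Ev C S Z \<in> hom C (Prd C S (Exp C S Z)) Z \<and>
     (\<forall>X \<in> Obj C. \<forall>f \<in> hom C (Prd C S X) Z.
        (\<exists>!g. g \<in> hom C X (Exp C S Z) \<and> Cmp C (Ev C S Z) (pmap C (Id C S) g) = f)))"

definition cartesian_closed :: "('o,'m) ccat \<Rightarrow> bool" where
  "cartesian_closed C \<longleftrightarrow> category C \<and> has_terminal C \<and> has_products C \<and> has_exponentials C"

definition mono :: "('o,'m) ccat \<Rightarrow> 'm \<Rightarrow> bool" where
  "mono C m \<longleftrightarrow> m \<in> Arr C \<and>
     (\<forall>Z a b. a \<in> hom C Z (Dom C m) \<longrightarrow> b \<in> hom C Z (Dom C m) \<longrightarrow>
        Cmp C m a = Cmp C m b \<longrightarrow> a = b)"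

definition regular_epi :: "('o,'m) ccat \<Rightarrow> 'm \<Rightarrow> bool" where
  "regular_epi C e \<longleftrightarrow> e \<in> Arr C \<and>
     (\<exists>P a b. a \<in> hom C P (Dom C e) \<and> b \<in> hom C P (Dom C e) \<and> Cmp C e a = Cmp C e b \<and>
        (\<forall>g \<in> Arr C. Dom C g = Dom C e \<longrightarrow> Cmp C g a = Cmp C g b \<longrightarrow>
           (\<exists>!k. k \<in> hom C (Cod C e) (Cod C g) \<and> Cmp C k e = g)))"

definition has_regepi_mono_factorizations :: "('o,'m) ccat \<Rightarrow> bool" where
  "has_regepi_mono_factorizations C \<longleftrightarrow> (\<forall>f \<in> Arr C. \<exists>e m.
     regular_epi C e \<and> mono C m \<and> Cod C e = Dom C m \<and> f = Cmp C m e)"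

definition transp :: "('o,'m) ccat \<Rightarrow> 'o \<Rightarrow> 'o \<Rightarrow> 'o \<Rightarrow> 'm \<Rightarrow> 'm" where
  "transp C S X Z f = (THE g. g \<in> hom C X (Exp C S Z) \<and> Cmp C (Ev C S Z) (pmap C (Id C S) g) = f)"

definition expmap :: "('o,'m) ccat \<Rightarrow> 'o \<Rightarrow> 'm \<Rightarrow> 'm" where
  "expmap C S u = transp C S (Exp C S (Dom C u)) (Cod C u) (Cmp C u (Ev C S (Dom C u)))"

text \<open>State monad T = UF, F = S x -, on objects and arrows; unit and multiplication.\<close>
definition Tob :: "('o,'m) ccat \<Rightarrow> 'o \<Rightarrow> 'o \<Rightarrow> 'o" where
  "Tob C S X = Exp C S (Prd C S X)"

definition Tmap :: "('o,'m) ccat \<Rightarrow> 'o \<Rightarrow> 'm \<Rightarrow> 'm" where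
  "Tmap C S u = expmap C S (pmap C (Id C S) u)"

definition eta :: "('o,'m) ccat \<Rightarrow> 'o \<Rightarrow> 'o \<Rightarrow> 'm" where
  "eta C S X = transp C S X (Prd C S X) (Id C (Prd C S X))"

definition mu :: "('o,'m) ccat \<Rightarrow> 'o \<Rightarrow> 'o \<Rightarrow> 'm" where
  "mu C S X = expmap C S (Ev C S (Prd C S X))"

definition T_algebra :: "('o,'m) ccat \<Rightarrow> 'o \<Rightarrow> 'o \<Rightarrow> 'm \<Rightarrow> bool" where
  "T_algebra C S X h \<longleftrightarrow> X \<in> Obj C \<and> h \<in> hom C (Tob C S X) X \<and>
     Cmp C h (Tmap C S h) = Cmp C h (mu C S X) \<and> Cmp C h (eta C S X) = Id C X"

definition f_alg :: "('o,'m) ccat \<Rightarrow> 'o \<Rightarrow> 'o \<Rightarrow> 'm \<Rightarrow> 'm" where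
  "f_alg C S X h = Cmp C h (transp C S (Prd C S X) (Prd C S X) (Pr2 C S (Prd C S X)))"

end

theory Submission
  imports Defs
begin

text \<open>Write \<open>P = S \<times> X\<close> and let \<open>q\<^sup>* : P \<rightarrow> TX\<close> be the transpose of the second
  projection. Transposed projections are natural, so \<open>q\<^sup>* \<circ> (1 \<times> h) = Th \<circ> c\<close> and
  \<open>q\<^sup>* \<circ> \<epsilon>\<^sub>P = \<mu>\<^sub>X \<circ> c\<close>, where \<open>c\<close> is the transposed projection of \<open>S \<times> TX\<close>; since
  \<open>h \<circ> Th = h \<circ> \<mu>\<^sub>X\<close>, the map \<open>f\<^sub>X = h \<circ> q\<^sup>*\<close> coequalizes \<open>1 \<times> h\<close> and
  \<open>\<epsilon>\<^sub>P : S \<times> TX \<rightarrow> P\<close>. As \<open>m\<close> is mono and \<open>f\<^sub>X = m \<circ> e\<close>, so does \<open>e\<close>. Hence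
  \<open>e\<^sup>* \<circ> h = (e \<circ> (1 \<times> h))\<^sup>* = (e \<circ> \<epsilon>\<^sub>P)\<^sup>* = e\<^sup>S\<close>, while
  \<open>\<epsilon>\<^sub>Y\<^sup>S \<circ> T(e\<^sup>*) = (\<epsilon>\<^sub>Y \<circ> (1 \<times> e\<^sup>*))\<^sup>S = e\<^sup>S\<close> by functoriality of \<open>(-)\<^sup>S\<close>.\<close>

locale ccc =
  fixes C :: "('o,'m) ccat"
  assumes cartesian_closed: "cartesian_closed C"
begin

lemma category: "category C"
  and has_products: "has_products C"
  and has_exponentials: "has_exponentials C"
  using cartesian_closed by (auto simp: cartesian_closed_def)

lemma hom_objs: "f \<in> hom C A B \<Longrightarrow> A \<in> Obj C \<and> B \<in> Obj C"
  using category unfolding category_def hom_def by auto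

lemma comp_in_hom: "f \<in> hom C A B \<Longrightarrow> g \<in> hom C B D \<Longrightarrow> Cmp C g f \<in> hom C A D"
  using category unfolding category_def hom_def by auto

lemma comp_assoc:
  "f \<in> hom C A B \<Longrightarrow> g \<in> hom C B D \<Longrightarrow> k \<in> hom C D E \<Longrightarrow>
   Cmp C k (Cmp C g f) = Cmp C (Cmp C k g) f"
  using category unfolding category_def hom_def by auto

lemma id_in_hom: "A \<in> Obj C \<Longrightarrow> Id C A \<in> hom C A A"
  using category unfolding category_def by auto

lemma comp_id_left: "f \<in> hom C A B \<Longrightarrow> Cmp C (Id C B) f = f"
  using category unfolding category_def hom_def by auto

lemma product:
  "A \<in> Obj C \<Longrightarrow> B \<in> Obj C \<Longrightarrow> Prd C A B \<in> Obj C \<and>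
   Pr1 C A B \<in> hom C (Prd C A B) A \<and> Pr2 C A B \<in> hom C (Prd C A B) B"
  using has_products unfolding has_products_def by auto

lemma product_arrow_eqI:
  assumes "A \<in> Obj C" "B \<in> Obj C" "p \<in> hom C Z (Prd C A B)" "q \<in> hom C Z (Prd C A B)"
    and "Cmp C (Pr1 C A B) p = Cmp C (Pr1 C A B) q" "Cmp C (Pr2 C A B) p = Cmp C (Pr2 C A B) q"
  shows "p = q"
proof -
  have "Cmp C (Pr1 C A B) p \<in> hom C Z A" "Cmp C (Pr2 C A B) p \<in> hom C Z B"
    using comp_in_hom assms product by blast+
  then have "\<exists>!r. r \<in> hom C Z (Prd C A B) \<and> Cmp C (Pr1 C A B) r = Cmp C (Pr1 C A B) p
       \<and> Cmp C (Pr2 C A B) r = Cmp C (Pr2 C A B) p"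
    using has_products assms(1,2) unfolding has_products_def by blast
  then show ?thesis using assms by metis
qed

lemma pmap:
  assumes "f \<in> hom C A B" "g \<in> hom C A' B'"
  shows "pmap C f g \<in> hom C (Prd C A A') (Prd C B B')"
    and "Cmp C (Pr1 C B B') (pmap C f g) = Cmp C f (Pr1 C A A')"
    and "Cmp C (Pr2 C B B') (pmap C f g) = Cmp C g (Pr2 C A A')"
proof -
  have objs: "A \<in> Obj C" "B \<in> Obj C" "A' \<in> Obj C" "B' \<in> Obj C"
    using hom_objs assms by blast+
  have "Cmp C f (Pr1 C A A') \<in> hom C (Prd C A A') B" "Cmp C g (Pr2 C A A') \<in> hom C (Prd C A A') B'"
    using comp_in_hom assms product objs by blast+
  then have unique: "\<exists>!p. p \<in> hom C (Prd C A A') (Prd C B B')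
      \<and> Cmp C (Pr1 C B B') p = Cmp C f (Pr1 C A A') \<and> Cmp C (Pr2 C B B') p = Cmp C g (Pr2 C A A')"
    using has_products objs unfolding has_products_def by blast
  have pmap_eq: "pmap C f g = (THE p. p \<in> hom C (Prd C A A') (Prd C B B')
      \<and> Cmp C (Pr1 C B B') p = Cmp C f (Pr1 C A A') \<and> Cmp C (Pr2 C B B') p = Cmp C g (Pr2 C A A'))"
    using assms by (simp add: pmap_def hom_def)
  from theI'[OF unique] show "pmap C f g \<in> hom C (Prd C A A') (Prd C B B')"
    and "Cmp C (Pr1 C B B') (pmap C f g) = Cmp C f (Pr1 C A A')"
    and "Cmp C (Pr2 C B B') (pmap C f g) = Cmp C g (Pr2 C A A')"
    unfolding pmap_eq by blast+
qed

lemma pmap_comp: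
  assumes f: "f \<in> hom C A B" and g: "g \<in> hom C B D"
    and f': "f' \<in> hom C A' B'" and g': "g' \<in> hom C B' D'"
  shows "pmap C (Cmp C g f) (Cmp C g' f') = Cmp C (pmap C g g') (pmap C f f')"
proof -
  have objs: "A \<in> Obj C" "A' \<in> Obj C" "B \<in> Obj C" "B' \<in> Obj C" "D \<in> Obj C" "D' \<in> Obj C"
    using hom_objs assms by blast+
  have gf: "Cmp C g f \<in> hom C A D" "Cmp C g' f' \<in> hom C A' D'"
    using comp_in_hom assms by blast+
  have pr: "Pr1 C A A' \<in> hom C (Prd C A A') A" "Pr2 C A A' \<in> hom C (Prd C A A') A'"
    "Pr1 C B B' \<in> hom C (Prd C B B') B" "Pr2 C B B' \<in> hom C (Prd C B B') B'"
    "Pr1 C D D' \<in> hom C (Prd C D D') D" "Pr2 C D D' \<in> hom C (Prd C D D') D'"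
    using product objs by blast+
  note pf = pmap[OF f f'] and pg = pmap[OF g g']
  show ?thesis
  proof (rule product_arrow_eqI[OF objs(5,6) pmap(1)[OF gf] comp_in_hom[OF pf(1) pg(1)]])
    have "Cmp C (Pr1 C D D') (Cmp C (pmap C g g') (pmap C f f'))
        = Cmp C (Cmp C g (Pr1 C B B')) (pmap C f f')"
      using comp_assoc[OF pf(1) pg(1) pr(5)] pg(2) by simp
    also have "\<dots> = Cmp C (Cmp C g f) (Pr1 C A A')"
      using comp_assoc[OF pf(1) pr(3) g] pf(2) comp_assoc[OF pr(1) f g] by simp
    finally show "Cmp C (Pr1 C D D') (pmap C (Cmp C g f) (Cmp C g' f')) =
        Cmp C (Pr1 C D D') (Cmp C (pmap C g g') (pmap C f f'))"
      using pmap(2)[OF gf] by simp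
  next
    have "Cmp C (Pr2 C D D') (Cmp C (pmap C g g') (pmap C f f'))
        = Cmp C (Cmp C g' (Pr2 C B B')) (pmap C f f')"
      using comp_assoc[OF pf(1) pg(1) pr(6)] pg(3) by simp
    also have "\<dots> = Cmp C (Cmp C g' f') (Pr2 C A A')"
      using comp_assoc[OF pf(1) pr(4) g'] pf(3) comp_assoc[OF pr(2) f' g'] by simp
    finally show "Cmp C (Pr2 C D D') (pmap C (Cmp C g f) (Cmp C g' f')) =
        Cmp C (Pr2 C D D') (Cmp C (pmap C g g') (pmap C f f'))"
      using pmap(3)[OF gf] by simp
  qed
qed

lemma pmap_id_comp:
  assumes "S \<in> Obj C" "f \<in> hom C A B" "g \<in> hom C B D"
  shows "pmap C (Id C S) (Cmp C g f) = Cmp C (pmap C (Id C S) g) (pmap C (Id C S) f)"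
  using pmap_comp[OF id_in_hom[OF assms(1)] id_in_hom[OF assms(1)] assms(2,3)]
    comp_id_left[OF id_in_hom[OF assms(1)]]
  by simp

lemma exponential:
  "S \<in> Obj C \<Longrightarrow> Z \<in> Obj C \<Longrightarrow> Exp C S Z \<in> Obj C \<and> Ev C S Z \<in> hom C (Prd C S (Exp C S Z)) Z"
  using has_exponentials unfolding has_exponentials_def by auto

lemma transp:
  assumes "S \<in> Obj C" "X \<in> Obj C" "f \<in> hom C (Prd C S X) Z"
  shows "transp C S X Z f \<in> hom C X (Exp C S Z)"
    and "Cmp C (Ev C S Z) (pmap C (Id C S) (transp C S X Z f)) = f"
proof -
  have "Z \<in> Obj C" using hom_objs assms(3) by blast
  then have "\<exists>!g. g \<in> hom C X (Exp C S Z) \<and> Cmp C (Ev C S Z) (pmap C (Id C S) g) = f"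
    using has_exponentials assms unfolding has_exponentials_def by blast
  from theI'[OF this] show "transp C S X Z f \<in> hom C X (Exp C S Z)"
    and "Cmp C (Ev C S Z) (pmap C (Id C S) (transp C S X Z f)) = f"
    unfolding transp_def by blast+
qed

lemma transp_unique:
  assumes "S \<in> Obj C" "Z \<in> Obj C" "g \<in> hom C X (Exp C S Z)"
    and "Cmp C (Ev C S Z) (pmap C (Id C S) g) = f"
  shows "transp C S X Z f = g"
proof -
  have "X \<in> Obj C" using hom_objs assms(3) by blast
  have "f \<in> hom C (Prd C S X) Z"
    using assms(4)[symmetric] comp_in_hom pmap(1)[OF id_in_hom[OF assms(1)] assms(3)]
      exponential assms(1,2) by blast
  then have "\<exists>!g. g \<in> hom C X (Exp C S Z) \<and> Cmp C (Ev C S Z) (pmap C (Id C S) g) = f"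
    using has_exponentials assms(1,2) \<open>X \<in> Obj C\<close> unfolding has_exponentials_def by blast
  then show ?thesis
    using transp[OF assms(1) \<open>X \<in> Obj C\<close> \<open>f \<in> _\<close>] assms(3,4) by metis
qed

lemma transp_comp:
  assumes S: "S \<in> Obj C" and f: "f \<in> hom C (Prd C S B) Z" and k: "k \<in> hom C A B"
  shows "Cmp C (transp C S B Z f) k = transp C S A Z (Cmp C f (pmap C (Id C S) k))"
proof -
  have B: "B \<in> Obj C" and Z: "Z \<in> Obj C" using hom_objs f k by blast+
  note ft = transp[OF S B f]
  have hom: "Cmp C (transp C S B Z f) k \<in> hom C A (Exp C S Z)"
    using comp_in_hom ft(1) k by blast
  have "Cmp C (Ev C S Z) (pmap C (Id C S) (Cmp C (transp C S B Z f) k))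
      = Cmp C (Ev C S Z) (Cmp C (pmap C (Id C S) (transp C S B Z f)) (pmap C (Id C S) k))"
    using pmap_id_comp[OF S k ft(1)] by simp
  also have "\<dots> = Cmp C (Cmp C (Ev C S Z) (pmap C (Id C S) (transp C S B Z f))) (pmap C (Id C S) k)"
    using comp_assoc pmap(1)[OF id_in_hom[OF S] k] pmap(1)[OF id_in_hom[OF S] ft(1)]
      exponential[OF S Z] by blast
  also have "\<dots> = Cmp C f (pmap C (Id C S) k)"
    using ft(2) by simp
  finally show ?thesis
    using transp_unique[OF S Z hom] by simp
qed

lemma expmap_eq_transp:
  "u \<in> hom C A B \<Longrightarrow> expmap C S u = transp C S (Exp C S A) B (Cmp C u (Ev C S A))"
  by (simp add: expmap_def hom_def)

lemma expmap_in_hom: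
  assumes "S \<in> Obj C" "u \<in> hom C A B"
  shows "expmap C S u \<in> hom C (Exp C S A) (Exp C S B)"
proof -
  have A: "A \<in> Obj C" using hom_objs assms(2) by blast
  have "Cmp C u (Ev C S A) \<in> hom C (Prd C S (Exp C S A)) B"
    using comp_in_hom exponential[OF assms(1) A] assms(2) by blast
  then show ?thesis
    using expmap_eq_transp[OF assms(2)] transp(1) assms(1) exponential[OF assms(1) A] by simp
qed

lemma expmap_comp_transp:
  assumes S: "S \<in> Obj C" and X: "X \<in> Obj C"
    and u: "u \<in> hom C A B" and f: "f \<in> hom C (Prd C S X) A"
  shows "Cmp C (expmap C S u) (transp C S X A f) = transp C S X B (Cmp C u f)"
proof -
  have A: "A \<in> Obj C" using hom_objs u by blast
  note ft = transp[OF S X f] and ev = conjunct2[OF exponential[OF S A]]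
  have "Cmp C u (Ev C S A) \<in> hom C (Prd C S (Exp C S A)) B"
    using comp_in_hom ev u by blast
  then have "Cmp C (expmap C S u) (transp C S X A f)
      = transp C S X B (Cmp C (Cmp C u (Ev C S A)) (pmap C (Id C S) (transp C S X A f)))"
    using expmap_eq_transp[OF u] transp_comp[OF S _ ft(1)] by simp
  also have "Cmp C (Cmp C u (Ev C S A)) (pmap C (Id C S) (transp C S X A f))
      = Cmp C u (Cmp C (Ev C S A) (pmap C (Id C S) (transp C S X A f)))"
    using comp_assoc[OF pmap(1)[OF id_in_hom[OF S] ft(1)] ev u] by simp
  finally show ?thesis using ft(2) by simp
qed

lemma expmap_comp:
  assumes S: "S \<in> Obj C" and u: "u \<in> hom C A B" and v: "v \<in> hom C B D"
  shows "Cmp C (expmap C S v) (expmap C S u) = expmap C S (Cmp C v u)"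
proof -
  have A: "A \<in> Obj C" using hom_objs u by blast
  have "Cmp C u (Ev C S A) \<in> hom C (Prd C S (Exp C S A)) B"
    using comp_in_hom exponential[OF S A] u by blast
  then have "Cmp C (expmap C S v) (expmap C S u) = transp C S (Exp C S A) D (Cmp C v (Cmp C u (Ev C S A)))"
    using expmap_eq_transp[OF u] expmap_comp_transp[OF S conjunct1[OF exponential[OF S A]] v] by simp
  also have "\<dots> = expmap C S (Cmp C v u)"
    using expmap_eq_transp[OF comp_in_hom[OF u v]] comp_assoc[OF conjunct2[OF exponential[OF S A]] u v]
    by simp
  finally show ?thesis .
qed

lemma transp_Pr2_natural:
  assumes S: "S \<in> Obj C" and g: "g \<in> hom C A B"
  shows "Cmp C (transp C S B B (Pr2 C S B)) g = Cmp C (expmap C S g) (transp C S A A (Pr2 C S A))"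
proof -
  have A: "A \<in> Obj C" and B: "B \<in> Obj C" using hom_objs g by blast+
  have "Cmp C (transp C S B B (Pr2 C S B)) g = transp C S A B (Cmp C (Pr2 C S B) (pmap C (Id C S) g))"
    using transp_comp[OF S _ g] product[OF S B] by blast
  also have "\<dots> = transp C S A B (Cmp C g (Pr2 C S A))"
    using pmap(3)[OF id_in_hom[OF S] g] by simp
  also have "\<dots> = Cmp C (expmap C S g) (transp C S A A (Pr2 C S A))"
    using expmap_comp_transp[OF S A g] product[OF S A] by simp
  finally show ?thesis .
qed

lemma algebra_coequalizes:
  assumes S: "S \<in> Obj C" and alg: "T_algebra C S X h"
  shows "Cmp C (f_alg C S X h) (pmap C (Id C S) h)
       = Cmp C (f_alg C S X h) (Ev C S (Prd C S X))"
proof -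
  define P where "P = Prd C S X"
  define STX where "STX = Prd C S (Exp C S P)"
  define q where "q = transp C S P P (Pr2 C S P)"
  define c where "c = transp C S STX STX (Pr2 C S STX)"
  have X: "X \<in> Obj C" and h: "h \<in> hom C (Exp C S P) X"
    and h_assoc: "Cmp C h (Tmap C S h) = Cmp C h (mu C S X)"
    using alg unfolding T_algebra_def Tob_def P_def by blast+
  have P: "P \<in> Obj C" and STX: "STX \<in> Obj C"
    using product exponential S X unfolding P_def STX_def by blast+
  have q: "q \<in> hom C P (Exp C S P)"
    using transp(1)[OF S P] product[OF S P] unfolding q_def by blast
  have c: "c \<in> hom C STX (Exp C S STX)"
    using transp(1)[OF S STX] product[OF S STX] unfolding c_def by blast
  have h1: "pmap C (Id C S) h \<in> hom C STX P"
    using pmap(1)[OF id_in_hom[OF S] h] unfolding STX_def P_def .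
  have ev: "Ev C S P \<in> hom C STX P"
    using exponential[OF S P] unfolding STX_def by blast
  have Th: "Tmap C S h \<in> hom C (Exp C S STX) (Exp C S P)"
    and mu: "mu C S X \<in> hom C (Exp C S STX) (Exp C S P)"
    using expmap_in_hom[OF S h1] expmap_in_hom[OF S ev]
    unfolding Tmap_def mu_def P_def by blast+
  have f_alg: "f_alg C S X h = Cmp C h q"
    unfolding f_alg_def q_def P_def ..
  have "Cmp C (f_alg C S X h) (pmap C (Id C S) h) = Cmp C h (Cmp C q (pmap C (Id C S) h))"
    using comp_assoc[OF h1 q h] f_alg by simp
  also have "\<dots> = Cmp C h (Cmp C (Tmap C S h) c)"
    using transp_Pr2_natural[OF S h1] unfolding q_def c_def Tmap_def by simp
  also have "\<dots> = Cmp C h (Cmp C (mu C S X) c)"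
    using comp_assoc[OF c Th h] comp_assoc[OF c mu h] h_assoc by simp
  also have "\<dots> = Cmp C h (Cmp C q (Ev C S P))"
    using transp_Pr2_natural[OF S ev] unfolding q_def c_def mu_def P_def by simp
  also have "\<dots> = Cmp C (f_alg C S X h) (Ev C S P)"
    using comp_assoc[OF ev q h] f_alg by simp
  finally show ?thesis unfolding P_def .
qed

lemma expmap_Ev_comp_Tmap_transp:
  assumes S: "S \<in> Obj C" and X: "X \<in> Obj C" and g: "g \<in> hom C (Prd C S X) Y"
  shows "Cmp C (expmap C S (Ev C S Y)) (Tmap C S (transp C S X Y g)) = expmap C S g"
proof -
  have Y: "Y \<in> Obj C" using hom_objs g by blast
  note gt = transp[OF S X g]
  have "Cmp C (expmap C S (Ev C S Y)) (Tmap C S (transp C S X Y g))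
      = expmap C S (Cmp C (Ev C S Y) (pmap C (Id C S) (transp C S X Y g)))"
    unfolding Tmap_def
    using expmap_comp[OF S pmap(1)[OF id_in_hom[OF S] gt(1)]] exponential[OF S Y] by blast
  then show ?thesis using gt(2) by simp
qed

lemma transp_algebra_morphism:
  assumes S: "S \<in> Obj C" and h: "h \<in> hom C (Tob C S X) X" and g: "g \<in> hom C (Prd C S X) Y"
    and coeq: "Cmp C g (pmap C (Id C S) h) = Cmp C g (Ev C S (Prd C S X))"
  shows "Cmp C (transp C S X Y g) h = Cmp C (expmap C S (Ev C S Y)) (Tmap C S (transp C S X Y g))"
proof -
  have "Cmp C (transp C S X Y g) h = transp C S (Tob C S X) Y (Cmp C g (Ev C S (Prd C S X)))"
    using transp_comp[OF S g h] coeq by simp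
  also have "\<dots> = expmap C S g"
    using expmap_eq_transp[OF g, of S] unfolding Tob_def by simp
  moreover have "X \<in> Obj C" using hom_objs h by blast
  ultimately show ?thesis using expmap_Ev_comp_Tmap_transp[OF S _ g] by simp
qed

end

theorem mainTheorem9:
  fixes C :: "('o,'m) ccat" and S X Y :: 'o and h e m :: 'm
  assumes "cartesian_closed C"
    and "has_regepi_mono_factorizations C"
    and "S \<in> Obj C"
    and "T_algebra C S X h"
    and "Y \<in> Obj C"
    and "e \<in> hom C (Prd C S X) Y" and "regular_epi C e"
    and "m \<in> hom C Y X" and "mono C m"
    and "f_alg C S X h = Cmp C m e"
  shows "Cmp C (transp C S X Y e) h
           = Cmp C (expmap C S (Ev C S Y)) (Tmap C S (transp C S X Y e))"
proof -
  interpret ccc C using assms(1) by unfold_locales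
  let ?P = "Prd C S X" and ?STX = "Prd C S (Tob C S X)"
  have X: "X \<in> Obj C" and h: "h \<in> hom C (Tob C S X) X"
    using assms(4) unfolding T_algebra_def by blast+
  have h1: "pmap C (Id C S) h \<in> hom C ?STX ?P"
    using pmap(1)[OF id_in_hom[OF assms(3)] h] .
  have ev: "Ev C S ?P \<in> hom C ?STX ?P"
    using exponential[OF assms(3) conjunct1[OF product[OF assms(3) X]]] unfolding Tob_def by blast
  have "Cmp C m (Cmp C e (pmap C (Id C S) h)) = Cmp C (f_alg C S X h) (pmap C (Id C S) h)"
    using comp_assoc[OF h1 assms(6,8)] assms(10) by simp
  also have "\<dots> = Cmp C (f_alg C S X h) (Ev C S ?P)"
    using algebra_coequalizes[OF assms(3,4)] .
  also have "\<dots> = Cmp C m (Cmp C e (Ev C S ?P))"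
    using comp_assoc[OF ev assms(6,8)] assms(10) by simp
  finally have "Cmp C e (pmap C (Id C S) h) = Cmp C e (Ev C S ?P)"
    using assms(6,8,9) comp_in_hom[OF h1] comp_in_hom[OF ev] unfolding mono_def hom_def by auto
  then show ?thesis using transp_algebra_morphism[OF assms(3) h assms(6)] by blast
qed

end
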